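(* Let $\gamma,\sigma:[a,b]\to V$ be continuous paths of bounded variation. Let $\phi:\mathbb{N}\cup\{0\}\to\mathbb{R}$ be such that both $|\phi|$ and $|\phi_{+1}|$ satisfy: $\sum_kC^k|\cdot|(k)(k!)^{-2}<\infty$ for every $C>0$, where $\phi_{+1}(k)=\phi(k+1)$. Then the $\phi$- and $\phi_{+1}$-signature kernels of $\gamma$ and $\sigma$ are well defined and, for all $(s,t)\in[a,b]^2$, \[ K_\phi^{\gamma,\sigma}(s,t)=\phi(0)+\int_a^s\int_a^tK_{\phi_{+1}}^{\gamma,\sigma}(u,v)\,\langle d\gamma_u,d\sigma_v\rangle. \]
   Context: $V$ is a finite-dimensional real inner product space, $\langle\cdot,\cdot\rangle_k$ the induced Hilbert–Schmidt inner product on $V^{\otimes k}$. Signature: $S(\gamma)^0=1$, $S(\gamma)^k_{s,t}=\int_{s<u_1<\dots<u_k<t}d\gamma_{u_1}\otimes\cdots\otimes d\gamma_{u_k}$. For $\phi$ real-valued, $K_\phi^{\gamma,\sigma}(s,t)=\sum_{k\ge0}\phi(k)\langle S(\gamma)^k_{a,s},S(\sigma)^k_{a,t}\rangle_k$. *)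

theory Defs
  imports "HOL-Analysis.Analysis"
begin

definition is_partition :: "real list \<Rightarrow> real \<Rightarrow> real \<Rightarrow> bool" where
  "is_partition p c d \<longleftrightarrow> p \<noteq> [] \<and> hd p = c \<and> last p = d \<and> sorted_wrt (<) p"

definition fine_partition :: "real \<Rightarrow> real list \<Rightarrow> bool" where
  "fine_partition \<delta> p \<longleftrightarrow> (\<forall>i < length p - 1. p ! Suc i - p ! i < \<delta>)"

definition partition_tags :: "real list \<Rightarrow> (nat \<Rightarrow> real) \<Rightarrow> bool" where
  "partition_tags p \<tau> \<longleftrightarrow> (\<forall>i < length p - 1. p ! i \<le> \<tau> i \<and> \<tau> i \<le> p ! Suc i)"

definition bounded_variation_on :: "(real \<Rightarrow> 'v::real_normed_vector) \<Rightarrow> real \<Rightarrow> real \<Rightarrow> bool" where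
  "bounded_variation_on \<gamma> a b \<longleftrightarrow>
     (\<exists>M. \<forall>p. is_partition p a b \<longrightarrow> (\<Sum>i < length p - 1. norm (\<gamma> (p ! Suc i) - \<gamma> (p ! i))) \<le> M)"

definition rs_sum :: "(real \<Rightarrow> real) \<Rightarrow> (real \<Rightarrow> real) \<Rightarrow> real list \<Rightarrow> (nat \<Rightarrow> real) \<Rightarrow> real" where
  "rs_sum f g p \<tau> = (\<Sum>i < length p - 1. f (\<tau> i) * (g (p ! Suc i) - g (p ! i)))"

definition has_rs_integral :: "(real \<Rightarrow> real) \<Rightarrow> (real \<Rightarrow> real) \<Rightarrow> real \<Rightarrow> real \<Rightarrow> real \<Rightarrow> bool" where
  "has_rs_integral f g c d I \<longleftrightarrow>
     (\<forall>\<epsilon>>0. \<exists>\<delta>>0. \<forall>p \<tau>. is_partition p c d \<and> fine_partition \<delta> p \<and> partition_tags p \<tau>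
        \<longrightarrow> \<bar>rs_sum f g p \<tau> - I\<bar> < \<epsilon>)"

definition rs_integral :: "(real \<Rightarrow> real) \<Rightarrow> (real \<Rightarrow> real) \<Rightarrow> real \<Rightarrow> real \<Rightarrow> real" where
  "rs_integral f g c d = (THE I. has_rs_integral f g c d I)"

definition rs2_sum :: "(real \<Rightarrow> real \<Rightarrow> real) \<Rightarrow> (real \<Rightarrow> 'v::real_inner) \<Rightarrow> (real \<Rightarrow> 'v)
    \<Rightarrow> real list \<Rightarrow> (nat \<Rightarrow> real) \<Rightarrow> real list \<Rightarrow> (nat \<Rightarrow> real) \<Rightarrow> real" where
  "rs2_sum K \<gamma> \<sigma> p \<tau> q \<rho> =
     (\<Sum>i < length p - 1. \<Sum>j < length q - 1.
        K (\<tau> i) (\<rho> j) * ((\<gamma> (p ! Suc i) - \<gamma> (p ! i)) \<bullet> (\<sigma> (q ! Suc j) - \<sigma> (q ! j))))"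

definition has_rs2_integral :: "(real \<Rightarrow> real \<Rightarrow> real) \<Rightarrow> (real \<Rightarrow> 'v::real_inner) \<Rightarrow> (real \<Rightarrow> 'v)
    \<Rightarrow> real \<Rightarrow> real \<Rightarrow> real \<Rightarrow> real \<Rightarrow> real \<Rightarrow> bool" where
  "has_rs2_integral K \<gamma> \<sigma> c d e f I \<longleftrightarrow>
     (\<forall>\<epsilon>>0. \<exists>\<delta>>0. \<forall>p \<tau> q \<rho>.
        is_partition p c d \<and> fine_partition \<delta> p \<and> partition_tags p \<tau> \<and>
        is_partition q e f \<and> fine_partition \<delta> q \<and> partition_tags q \<rho>
        \<longrightarrow> \<bar>rs2_sum K \<gamma> \<sigma> p \<tau> q \<rho> - I\<bar> < \<epsilon>)"

text \<open>Coordinates of the level-k signature w.r.t. the orthonormal basis \<open>Basis\<close> of V: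
  for a word [e_1,...,e_k] of basis vectors, \<open>sig_coord \<gamma> a [e_1,...,e_k] t\<close> is
  \<open>\<integral>_{a<u_1<...<u_k<t} d<\<gamma>,e_1>_{u_1} ... d<\<gamma>,e_k>_{u_k}\<close>, defined by iterated
  Riemann--Stieltjes integration (peeling off the last letter). \<open>sig_rev\<close> takes the reversed word.\<close>
fun sig_rev :: "(real \<Rightarrow> 'v::euclidean_space) \<Rightarrow> real \<Rightarrow> 'v list \<Rightarrow> real \<Rightarrow> real" where
  "sig_rev \<gamma> a [] t = 1"
| "sig_rev \<gamma> a (e # w) t = rs_integral (\<lambda>u. sig_rev \<gamma> a w u) (\<lambda>u. \<gamma> u \<bullet> e) a t"

definition sig_coord :: "(real \<Rightarrow> 'v::euclidean_space) \<Rightarrow> real \<Rightarrow> 'v list \<Rightarrow> real \<Rightarrow> real" where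
  "sig_coord \<gamma> a w t = sig_rev \<gamma> a (rev w) t"

text \<open>Words of length k in the basis vectors (index the orthonormal basis of V^{\<otimes>k}).\<close>
definition words :: "nat \<Rightarrow> 'v::euclidean_space list set" where
  "words k = {w. length w = k \<and> set w \<subseteq> Basis}"

text \<open>Hilbert--Schmidt inner product \<open><S(\<gamma>)^k_{a,s}, S(\<sigma>)^k_{a,t}>_k\<close>.\<close>
definition sig_inner :: "nat \<Rightarrow> (real \<Rightarrow> 'v::euclidean_space) \<Rightarrow> (real \<Rightarrow> 'v) \<Rightarrow> real \<Rightarrow> real \<Rightarrow> real \<Rightarrow> real" where
  "sig_inner k \<gamma> \<sigma> a s t = (\<Sum>w \<in> words k. sig_coord \<gamma> a w s * sig_coord \<sigma> a w t)"

definition sig_kernel_terms :: "(nat \<Rightarrow> real) \<Rightarrow> (real \<Rightarrow> 'v::euclidean_space) \<Rightarrow> (real \<Rightarrow> 'v) \<Rightarrow> real \<Rightarrow> real \<Rightarrow> real \<Rightarrow> nat \<Rightarrow> real" where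
  "sig_kernel_terms \<phi> \<gamma> \<sigma> a s t k = \<phi> k * sig_inner k \<gamma> \<sigma> a s t"

definition sig_kernel :: "(nat \<Rightarrow> real) \<Rightarrow> (real \<Rightarrow> 'v::euclidean_space) \<Rightarrow> (real \<Rightarrow> 'v) \<Rightarrow> real \<Rightarrow> real \<Rightarrow> real \<Rightarrow> real" where
  "sig_kernel \<phi> \<gamma> \<sigma> a s t = (\<Sum>k. sig_kernel_terms \<phi> \<gamma> \<sigma> a s t k)"

end

(*
  Write L_n(s,t) for the level-n term <S^n_{a,s}(gamma), S^n_{a,t}(sigma)>.  The level n+1
  signature is the Riemann-Stieltjes integral of level n against d gamma, and the double
  Riemann-Stieltjes sums of a product kernel F(u) G(v) against <d gamma, d sigma> split,
  coordinate by coordinate, into products of one-dimensional sums; hence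
  L_{n+1}(s,t) = int int L_n(u,v) <d gamma_u, d sigma_v>.  The factorial decay
  |S^w_{a,t}| <= V_{a,t}(gamma)^n / n! of the signature coordinates gives |L_n| <= C^n / (n!)^2
  on [a,b]^2, so under the growth hypothesis on phi the series sum_n phi(n+1) L_n converges
  uniformly (Weierstrass M-test).  A uniform limit of integrands may be exchanged with the double
  integral, whose sums are bounded by the total variations of gamma and sigma, and summing the
  level identities gives the claim.  The one-dimensional integrals exist because the
  Riemann-Stieltjes sums of a continuous integrand against a bounded-variation integrator form a
  Cauchy net as the mesh of the partition tends to zero.
*)

theory Submission
  imports Defs
begin

section \<open>Partitions of a compact interval\<close>

lemma is_partition_basic:
  assumes "is_partition p c d"
  shows is_partition_length: "length p \<ge> 1"
    and is_partition_first: "p ! 0 = c"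
    and is_partition_last: "p ! (length p - 1) = d"
    and is_partition_less: "\<And>i j. i < j \<Longrightarrow> j < length p \<Longrightarrow> p ! i < p ! j"
  using assms unfolding is_partition_def
  by (auto simp: hd_conv_nth last_conv_nth sorted_wrt_iff_nth_less Suc_le_eq)

lemma is_partition_le:
  assumes "is_partition p c d" "i \<le> j" "j < length p"
  shows "p ! i \<le> p ! j"
  using is_partition_less[OF assms(1)] assms(2,3) by (metis order.order_iff_strict)

lemma is_partition_nth_inj:
  assumes "is_partition p c d" "i < length p" "j < length p" "p ! i = p ! j"
  shows "i = j"
  using is_partition_less[OF assms(1)] assms(2-4) by (metis less_irrefl nat_neq_iff)

lemma is_partition_bounds:
  assumes "is_partition p c d" "i < length p"
  shows "c \<le> p ! i" "p ! i \<le> d"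
  using is_partition_le[OF assms(1), of 0 i] is_partition_le[OF assms(1), of i "length p - 1"]
    is_partition_first[OF assms(1)] is_partition_last[OF assms(1)] assms(2)
  by auto

lemma is_partition_two: "x < y \<Longrightarrow> is_partition [x, y] x y"
  by (simp add: is_partition_def)

lemma partition_tags_left: "is_partition p c d \<Longrightarrow> partition_tags p (\<lambda>i. p ! i)"
  unfolding partition_tags_def using is_partition_le[of p c d] by auto

lemma partition_tags_bounds:
  assumes "is_partition p c d" "partition_tags p \<tau>" "i < length p - 1"
  shows "p ! i \<le> \<tau> i" "\<tau> i \<le> p ! Suc i" "c \<le> \<tau> i" "\<tau> i \<le> d"
  using assms is_partition_bounds[OF assms(1), of i] is_partition_bounds[OF assms(1), of "Suc i"]
  unfolding partition_tags_def by fastforce+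

lemma fine_partition_mono: "fine_partition \<delta> p \<Longrightarrow> \<delta> \<le> \<delta>' \<Longrightarrow> fine_partition \<delta>' p"
  unfolding fine_partition_def by force

lemma fine_partition_exists:
  assumes "c \<le> d" "\<delta> > 0"
  obtains p where "is_partition p c d" "fine_partition \<delta> p"
proof (cases "c = d")
  case True
  then show ?thesis using that[of "[c]"] by (simp add: is_partition_def fine_partition_def)
next
  case False
  define n :: nat where "n = nat \<lceil>(d - c) / \<delta>\<rceil> + 1"
  have "(d - c) / \<delta> < real n" unfolding n_def by linarith
  then have n: "n \<ge> 1" "d - c < \<delta> * real n"
    using assms(2) unfolding n_def by (auto simp: field_simps)
  define p where "p = map (\<lambda>i. c + (d - c) * real i / real n) [0..<Suc n]"
  have len: "length p = Suc n" unfolding p_def by simp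
  have nth: "p ! i = c + (d - c) * real i / real n" if "i < Suc n" for i
    using that unfolding p_def by (simp del: upt_Suc)
  have "p \<noteq> []" using len by auto
  then have "hd p = c" "last p = d" using len nth[of 0] nth[of n] n
    by (simp_all add: hd_conv_nth last_conv_nth)
  moreover have "sorted_wrt (<) p"
    unfolding sorted_wrt_iff_nth_less using len nth n assms(1) False
    by (auto simp: divide_strict_right_mono mult_strict_left_mono)
  ultimately have "is_partition p c d" using \<open>p \<noteq> []\<close> by (simp add: is_partition_def)
  moreover have "fine_partition \<delta> p"
    unfolding fine_partition_def len
  proof (intro allI impI)
    fix i assume "i < Suc n - 1"
    then have "p ! Suc i - p ! i = (d - c) / real n"
      using nth[of i] nth[of "Suc i"] n by (simp add: field_simps)
    also have "\<dots> < \<delta>" using n by (simp add: field_simps)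
    finally show "p ! Suc i - p ! i < \<delta>" .
  qed
  ultimately show ?thesis by (rule that)
qed

lemma partition_exists: "c \<le> d \<Longrightarrow> \<exists>p. is_partition p c d"
  using fine_partition_exists[of c d 1] by auto

lemma sum_lessThan_add_nat: "(\<Sum>i<(m::nat) + n. f i) = (\<Sum>i<m. f i) + (\<Sum>j<n. f (m + j))"
  by (induction n) (auto simp: add.assoc)

context
  fixes P Q :: "real list" and a x y :: real
  assumes P: "is_partition P a x" and Q: "is_partition Q x y"
begin

lemma length_partition_append: "length (P @ tl Q) - 1 = (length P - 1) + (length Q - 1)"
  using is_partition_length[OF P] is_partition_length[OF Q] by simp

lemma nth_partition_append:
  assumes "i \<le> (length P - 1) + (length Q - 1)"
  shows "(P @ tl Q) ! i = (if i < length P - 1 then P ! i else Q ! (i - (length P - 1)))"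
proof -
  consider "i < length P - 1" | "i = length P - 1" | "length P \<le> i"
    using is_partition_length[OF P] by linarith
  then show ?thesis
  proof cases
    case 2
    moreover have "length P - 1 < length P" using is_partition_length[OF P] by simp
    ultimately show ?thesis
      using is_partition_last[OF P] is_partition_first[OF Q] by (simp add: nth_append)
  qed (use assms is_partition_length[OF P] is_partition_length[OF Q] in
        \<open>auto simp: nth_append nth_tl Suc_diff_le\<close>)
qed

lemma partition_append_cell:
  assumes "i < (length P - 1) + (length Q - 1)"
  shows "((P @ tl Q) ! i, (P @ tl Q) ! Suc i) =
    (if i < length P - 1 then (P ! i, P ! Suc i)
     else (Q ! (i - (length P - 1)), Q ! Suc (i - (length P - 1))))"
  using assms nth_partition_append[of i] nth_partition_append[of "Suc i"]
    is_partition_last[OF P] is_partition_first[OF Q]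
  by (cases "Suc i = length P - 1") (auto simp: Suc_diff_le)

lemma is_partition_append: "is_partition (P @ tl Q) a y"
proof -
  obtain q qs where Qe: "Q = q # qs" and q: "q = x"
    using Q by (cases Q) (auto simp: is_partition_def)
  have "last (P @ tl Q) = y"
    using P Q Qe q by (cases "qs = []") (auto simp: is_partition_def)
  moreover have "\<forall>u\<in>set P. u \<le> x"
    using is_partition_bounds(2)[OF P] by (auto simp: in_set_conv_nth)
  moreover have "\<forall>v\<in>set qs. x < v" using Q Qe q by (simp add: is_partition_def)
  ultimately show ?thesis using P Q Qe unfolding is_partition_def
    by (auto simp: sorted_wrt_append intro: le_less_trans)
qed

lemma sum_partition_append:
  "(\<Sum>i<length (P @ tl Q) - 1. F ((P @ tl Q) ! i) ((P @ tl Q) ! Suc i))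
     = (\<Sum>i<length P - 1. F (P ! i) (P ! Suc i)) + (\<Sum>j<length Q - 1. F (Q ! j) (Q ! Suc j))"
proof -
  let ?R = "P @ tl Q" and ?m = "length P - 1" and ?n = "length Q - 1"
  have "F (?R ! i) (?R ! Suc i) = F (P ! i) (P ! Suc i)" if "i < ?m" for i
    using partition_append_cell[of i] that by auto
  moreover have "F (?R ! (?m + j)) (?R ! Suc (?m + j)) = F (Q ! j) (Q ! Suc j)" if "j < ?n" for j
    using partition_append_cell[of "?m + j"] that by auto
  ultimately show ?thesis unfolding length_partition_append sum_lessThan_add_nat by simp
qed

lemma fine_partition_append:
  assumes "fine_partition \<delta> P" "fine_partition \<delta> Q"
  shows "fine_partition \<delta> (P @ tl Q)"
  unfolding fine_partition_def length_partition_append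
proof (intro allI impI)
  fix i assume "i < (length P - 1) + (length Q - 1)"
  then show "(P @ tl Q) ! Suc i - (P @ tl Q) ! i < \<delta>"
    using partition_append_cell[of i] assms unfolding fine_partition_def
    by (cases "i < length P - 1") auto
qed

end

lemma common_refinement:
  assumes P: "is_partition P c d" and Q: "is_partition Q c d"
  obtains R where "is_partition R c d" "set P \<subseteq> set R" "set Q \<subseteq> set R"
proof -
  obtain R where s: "sorted_wrt (<) R" and sR: "set R = set P \<union> set Q"
    using finite_set_strict_sorted[of "set P \<union> set Q"] by auto
  have c: "c \<in> set R" and d: "d \<in> set R"
    using sR P unfolding is_partition_def by (auto intro: hd_in_set last_in_set)
  have bnd: "\<forall>z\<in>set R. c \<le> z \<and> z \<le> d"
    using sR is_partition_bounds[OF P] is_partition_bounds[OF Q] by (auto simp: in_set_conv_nth)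
  obtain r rs where Re: "R = r # rs" using c by (cases R) auto
  have "hd R = c" using bnd c s Re by (auto simp: less_imp_le intro: order.antisym)
  moreover have "last R = d"
  proof -
    obtain k where k: "k < length R" "R ! k = d" using d by (auto simp: in_set_conv_nth)
    have "R ! k \<le> R ! (length R - 1)"
      using s k by (cases "k = length R - 1") (auto simp: sorted_wrt_iff_nth_less less_imp_le)
    moreover have "last R = R ! (length R - 1)" using Re by (simp add: last_conv_nth)
    moreover have "last R \<le> d" using bnd Re by simp
    ultimately show ?thesis using k by simp
  qed
  ultimately have "is_partition R c d" using s Re unfolding is_partition_def by simp
  then show ?thesis using that sR by auto
qed

lemma partition_refinement_index:
  assumes P: "is_partition P c d" and R: "is_partition R c d" and sub: "set P \<subseteq> set R"
  obtains A where "\<And>i. i < length P \<Longrightarrow> A i < length R \<and> R ! A i = P ! i"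
    and "A 0 = 0" and "A (length P - 1) = length R - 1"
    and "\<And>i j. i < j \<Longrightarrow> j < length P \<Longrightarrow> A i < A j"
proof -
  have "\<forall>i. \<exists>j. i < length P \<longrightarrow> j < length R \<and> R ! j = P ! i"
    using sub by (metis in_set_conv_nth nth_mem subsetD)
  then obtain A where A: "\<And>i. i < length P \<Longrightarrow> A i < length R \<and> R ! A i = P ! i" by metis
  have lengths: "0 < length P" "0 < length R"
    using is_partition_length[OF P] is_partition_length[OF R] by auto
  have "A 0 = 0"
    using A[of 0] lengths is_partition_first[OF P] is_partition_first[OF R]
    by (intro is_partition_nth_inj[OF R]) auto
  moreover have "A (length P - 1) = length R - 1"
    using A[of "length P - 1"] lengths is_partition_last[OF P] is_partition_last[OF R]
    by (intro is_partition_nth_inj[OF R]) auto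
  moreover have "A i < A j" if "i < j" "j < length P" for i j
    using is_partition_less[OF P that] is_partition_le[OF R, of "A j" "A i"] A[of i] A[of j] that
    by (metis linorder_not_less order.strict_trans order_less_imp_not_less)
  ultimately show ?thesis using that A by blast
qed

section \<open>Variation\<close>

definition variation_sum :: "(real \<Rightarrow> 'v::real_normed_vector) \<Rightarrow> real list \<Rightarrow> real" where
  "variation_sum g p = (\<Sum>i<length p - 1. norm (g (p ! Suc i) - g (p ! i)))"

definition total_variation :: "(real \<Rightarrow> 'v::real_normed_vector) \<Rightarrow> real \<Rightarrow> real \<Rightarrow> real" where
  "total_variation g c d = (SUP p\<in>{p. is_partition p c d}. variation_sum g p)"

lemma bounded_variation_on_iff:
  "bounded_variation_on g c d \<longleftrightarrow> (\<exists>M. \<forall>p. is_partition p c d \<longrightarrow> variation_sum g p \<le> M)"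
  unfolding bounded_variation_on_def variation_sum_def ..

lemma variation_sum_nonneg: "variation_sum g p \<ge> 0"
  unfolding variation_sum_def by (simp add: sum_nonneg)

lemma variation_sum_two: "variation_sum g [x, y] = norm (g y - g x)"
  by (simp add: variation_sum_def)

lemma variation_sum_append:
  "is_partition P a x \<Longrightarrow> is_partition Q x y \<Longrightarrow>
    variation_sum g (P @ tl Q) = variation_sum g P + variation_sum g Q"
  unfolding variation_sum_def by (rule sum_partition_append)

lemma variation_sum_le_total_variation:
  assumes "bounded_variation_on g c d" "is_partition p c d"
  shows "variation_sum g p \<le> total_variation g c d"
proof -
  obtain M where "\<forall>p. is_partition p c d \<longrightarrow> variation_sum g p \<le> M"
    using assms(1) unfolding bounded_variation_on_iff by blast
  then show ?thesis
    unfolding total_variation_def using assms(2) by (intro cSUP_upper bdd_aboveI2[of _ _ M]) auto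
qed

lemma total_variation_nonneg:
  assumes "bounded_variation_on g c d" "c \<le> d"
  shows "0 \<le> total_variation g c d"
  using partition_exists[OF assms(2)] variation_sum_le_total_variation[OF assms(1)]
    variation_sum_nonneg order_trans by metis

lemma total_variation_le:
  assumes "c \<le> d" "\<And>p. is_partition p c d \<Longrightarrow> variation_sum g p \<le> M"
  shows "total_variation g c d \<le> M"
  unfolding total_variation_def using partition_exists[OF assms(1)] assms(2)
  by (intro cSUP_least) auto

lemma variation_sum_le_total_variation_superinterval:
  assumes g: "bounded_variation_on g a b" and "a \<le> c" "d \<le> b" and p: "is_partition p c d"
  shows "variation_sum g p \<le> total_variation g a b"
proof -
  obtain P Q where P: "is_partition P a c" and Q: "is_partition Q d b"
    using partition_exists assms(2,3) by blast
  have R: "is_partition ((P @ tl p) @ tl Q) a b"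
    using is_partition_append[OF is_partition_append[OF P p] Q] .
  have "variation_sum g p \<le> variation_sum g ((P @ tl p) @ tl Q)"
    unfolding variation_sum_append[OF is_partition_append[OF P p] Q] variation_sum_append[OF P p]
    using variation_sum_nonneg[of g P] variation_sum_nonneg[of g Q] by linarith
  also have "\<dots> \<le> total_variation g a b" by (rule variation_sum_le_total_variation[OF g R])
  finally show ?thesis .
qed

lemma bounded_variation_on_subinterval:
  "bounded_variation_on g a b \<Longrightarrow> a \<le> c \<Longrightarrow> d \<le> b \<Longrightarrow> bounded_variation_on g c d"
  unfolding bounded_variation_on_iff[of g c d]
  using variation_sum_le_total_variation_superinterval by blast

lemma total_variation_subinterval_le:
  "bounded_variation_on g a b \<Longrightarrow> a \<le> c \<Longrightarrow> c \<le> d \<Longrightarrow> d \<le> b \<Longrightarrow>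
    total_variation g c d \<le> total_variation g a b"
  by (intro total_variation_le variation_sum_le_total_variation_superinterval)

lemma total_variation_add_norm_le:
  assumes g: "bounded_variation_on g a y" and "a \<le> x" "x \<le> y"
  shows "total_variation g a x + norm (g y - g x) \<le> total_variation g a y"
proof (cases "x = y")
  case True
  then show ?thesis by simp
next
  case False
  then have xy: "is_partition [x, y] x y" using assms(3) by (simp add: is_partition_two)
  have "variation_sum g p \<le> total_variation g a y - norm (g y - g x)" if p: "is_partition p a x" for p
    using variation_sum_le_total_variation[OF g is_partition_append[OF p xy]]
    unfolding variation_sum_append[OF p xy] variation_sum_two by simp
  then show ?thesis using total_variation_le[OF assms(2)] by fastforce
qed

lemma variation_sum_inner_le: "variation_sum (\<lambda>u. g u \<bullet> e) p \<le> norm e * variation_sum g p"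
  unfolding variation_sum_def sum_distrib_left
  by (intro sum_mono) (metis inner_diff_left Cauchy_Schwarz_ineq2 mult.commute real_norm_def)

lemma bounded_variation_on_inner:
  "bounded_variation_on g c d \<Longrightarrow> bounded_variation_on (\<lambda>u. g u \<bullet> e) c d"
  unfolding bounded_variation_on_iff
  by (metis variation_sum_inner_le mult_left_mono norm_ge_zero order_trans)

section \<open>Riemann--Stieltjes integrals\<close>

lemma sum_lessThan_blocks:
  fixes A :: "nat \<Rightarrow> nat"
  assumes "A 0 = 0" and "\<And>i. i < m \<Longrightarrow> A i \<le> A (Suc i)"
  shows "(\<Sum>j<A m. F j) = (\<Sum>i<m. \<Sum>j\<in>{A i..<A (Suc i)}. F j)"
  using assms(2)
proof (induction m)
  case (Suc m)
  have "(\<Sum>j<A (Suc m). F j) = (\<Sum>j<A m. F j) + (\<Sum>j\<in>{A m..<A (Suc m)}. F j)"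
    using sum.atLeastLessThan_concat[of 0 "A m" "A (Suc m)" F] Suc.prems[of m]
    by (simp add: atLeast0LessThan)
  then show ?case using Suc by simp
qed (simp add: assms(1))

lemma rs_sum_refinement_bound:
  fixes f g :: "real \<Rightarrow> real"
  assumes P: "is_partition P c d" and R: "is_partition R c d" and sub: "set P \<subseteq> set R"
    and tR: "partition_tags R \<rho>"
    and osc: "\<And>i x. i < length P - 1 \<Longrightarrow> P ! i \<le> x \<Longrightarrow> x \<le> P ! Suc i \<Longrightarrow> \<bar>f (\<tau> i) - f x\<bar> \<le> \<eta>"
  shows "\<bar>rs_sum f g P \<tau> - rs_sum f g R \<rho>\<bar> \<le> \<eta> * variation_sum g R"
proof -
  define m n where "m = length P - 1" and "n = length R - 1"
  obtain A where A: "\<And>i. i < length P \<Longrightarrow> A i < length R \<and> R ! A i = P ! i"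
    and A0: "A 0 = 0" and Am: "A m = n" and Amono: "\<And>i j. i < j \<Longrightarrow> j < length P \<Longrightarrow> A i < A j"
    using partition_refinement_index[OF P R sub] unfolding m_def n_def by blast
  have lP: "length P = Suc m" using is_partition_length[OF P] unfolding m_def by simp
  have Astep: "A i \<le> A (Suc i)" if "i < m" for i using Amono[of i "Suc i"] that lP by simp
  \<comment> \<open>the \<open>i\<close>-th cell of \<open>P\<close> is the union of the cells of \<open>R\<close> with indices in \<open>{A i..<A (Suc i)}\<close>\<close>
  have blocks: "(\<Sum>j<n. F j) = (\<Sum>i<m. \<Sum>j\<in>{A i..<A (Suc i)}. F j)" for F :: "nat \<Rightarrow> real"
    using sum_lessThan_blocks[of A m F] A0 Am Astep by simp
  define D where "D j = g (R ! Suc j) - g (R ! j)" for j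
  have cell: "g (P ! Suc i) - g (P ! i) = (\<Sum>j\<in>{A i..<A (Suc i)}. D j)" if "i < m" for i
    using sum_Suc_diff'[OF Astep[OF that], of "\<lambda>j. g (R ! j)"] A[of i] A[of "Suc i"] that lP
    unfolding D_def by simp
  have tag: "P ! i \<le> \<rho> j \<and> \<rho> j \<le> P ! Suc i"
    if i: "i < m" and j: "A i \<le> j" "j < A (Suc i)" for i j
  proof -
    have jn: "j < n" using j Am Amono[of "Suc i" m] i lP by (cases "Suc i = m") auto
    have "P ! i \<le> R ! j" using A[of i] is_partition_le[OF R j(1)] jn i lP unfolding n_def by simp
    moreover have "R ! Suc j \<le> P ! Suc i"
      using A[of "Suc i"] is_partition_le[OF R, of "Suc j" "A (Suc i)"] j i lP by simp
    ultimately show ?thesis using partition_tags_bounds(1,2)[OF R tR, of j] jn unfolding n_def by simp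
  qed
  have "rs_sum f g P \<tau> - rs_sum f g R \<rho> = (\<Sum>i<m. \<Sum>j\<in>{A i..<A (Suc i)}. (f (\<tau> i) - f (\<rho> j)) * D j)"
    using cell blocks[of "\<lambda>j. f (\<rho> j) * D j"]
    unfolding rs_sum_def m_def[symmetric] n_def[symmetric] D_def[symmetric]
    by (simp add: sum_distrib_left sum_subtractf left_diff_distrib)
  also have "\<bar>\<dots>\<bar> \<le> (\<Sum>i<m. \<Sum>j\<in>{A i..<A (Suc i)}. \<eta> * \<bar>D j\<bar>)"
  proof (intro order_trans[OF sum_abs] sum_mono order_trans[OF sum_abs])
    fix i j assume "i \<in> {..<m}" "j \<in> {A i..<A (Suc i)}"
    then have "\<bar>f (\<tau> i) - f (\<rho> j)\<bar> \<le> \<eta>" using osc[of i "\<rho> j"] tag[of i j] unfolding m_def by auto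
    then show "\<bar>(f (\<tau> i) - f (\<rho> j)) * D j\<bar> \<le> \<eta> * \<bar>D j\<bar>"
      by (simp add: abs_mult mult_right_mono)
  qed
  also have "\<dots> = \<eta> * variation_sum g R"
    using blocks[of "\<lambda>j. \<bar>D j\<bar>"] unfolding variation_sum_def D_def n_def
    by (simp add: sum_distrib_left)
  finally show ?thesis .
qed

lemma rs_sum_cauchy:
  fixes f g :: "real \<Rightarrow> real"
  assumes f: "continuous_on {c..d} f" and g: "bounded_variation_on g c d" and "\<epsilon> > 0"
  obtains \<delta> where "\<delta> > 0"
    and "\<And>P \<tau> Q \<rho>. is_partition P c d \<Longrightarrow> fine_partition \<delta> P \<Longrightarrow> partition_tags P \<tau> \<Longrightarrow>
      is_partition Q c d \<Longrightarrow> fine_partition \<delta> Q \<Longrightarrow> partition_tags Q \<rho> \<Longrightarrow>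
      \<bar>rs_sum f g P \<tau> - rs_sum f g Q \<rho>\<bar> \<le> \<epsilon>"
proof -
  define M where "M = total_variation g c d"
  define \<eta> where "\<eta> = \<epsilon> / (2 * (\<bar>M\<bar> + 1))"
  have \<eta>: "\<eta> > 0" using \<open>\<epsilon> > 0\<close> unfolding \<eta>_def by (simp add: add_pos_nonneg)
  have "\<eta> * M \<le> \<eta> * (\<bar>M\<bar> + 1)" using \<eta> by (intro mult_left_mono) auto
  also have "\<dots> = \<epsilon> / 2" unfolding \<eta>_def by (simp add: field_simps)
  finally have \<eta>M: "\<eta> * M \<le> \<epsilon> / 2" .
  obtain \<delta> where \<delta>: "\<delta> > 0"
    and uc: "\<And>x x'. x \<in> {c..d} \<Longrightarrow> x' \<in> {c..d} \<Longrightarrow> dist x' x < \<delta> \<Longrightarrow> dist (f x') (f x) < \<eta>"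
    using compact_uniformly_continuous[OF f compact_Icc] \<eta>
    unfolding uniformly_continuous_on_def by metis
  have half: "\<bar>rs_sum f g P \<tau> - rs_sum f g R (\<lambda>i. R ! i)\<bar> \<le> \<epsilon> / 2"
    if P: "is_partition P c d" "fine_partition \<delta> P" "partition_tags P \<tau>"
      and R: "is_partition R c d" "set P \<subseteq> set R" for P \<tau> R
  proof -
    have "\<bar>rs_sum f g P \<tau> - rs_sum f g R (\<lambda>i. R ! i)\<bar> \<le> \<eta> * variation_sum g R"
    proof (rule rs_sum_refinement_bound[OF P(1) R(1,2) partition_tags_left[OF R(1)]])
      fix i x assume i: "i < length P - 1" and x: "P ! i \<le> x" "x \<le> P ! Suc i"
      have "P ! Suc i - P ! i < \<delta>" using P(2) i unfolding fine_partition_def by simp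
      then have "\<bar>\<tau> i - x\<bar> < \<delta>" using partition_tags_bounds(1,2)[OF P(1,3) i] x by linarith
      moreover have "Suc i < length P" using i by simp
      then have "x \<in> {c..d}"
        using is_partition_bounds[OF P(1), of i] is_partition_bounds[OF P(1), of "Suc i"] x by auto
      ultimately show "\<bar>f (\<tau> i) - f x\<bar> \<le> \<eta>"
        using uc[of x "\<tau> i"] partition_tags_bounds(3,4)[OF P(1,3) i] by (simp add: dist_real_def)
    qed
    also have "\<dots> \<le> \<eta> * M"
      using variation_sum_le_total_variation[OF g R(1)] \<eta> unfolding M_def by simp
    finally show ?thesis using \<eta>M by simp
  qed
  show ?thesis
  proof (rule that[OF \<delta>])
    fix P \<tau> Q \<rho>
    assume "is_partition P c d" "fine_partition \<delta> P" "partition_tags P \<tau>"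
      and "is_partition Q c d" "fine_partition \<delta> Q" "partition_tags Q \<rho>"
    moreover obtain R where "is_partition R c d" "set P \<subseteq> set R" "set Q \<subseteq> set R"
      using common_refinement calculation(1,4) by metis
    ultimately show "\<bar>rs_sum f g P \<tau> - rs_sum f g Q \<rho>\<bar> \<le> \<epsilon>"
      using half[of P \<tau> R] half[of Q \<rho> R] by linarith
  qed
qed

definition mesh_filter :: "real \<Rightarrow> real \<Rightarrow> (real list \<times> (nat \<Rightarrow> real)) filter" where
  "mesh_filter c d = (INF \<delta>\<in>{0<..}.
     principal {(p, \<tau>). is_partition p c d \<and> fine_partition \<delta> p \<and> partition_tags p \<tau>})"

lemma eventually_mesh_filter:
  "eventually P (mesh_filter c d) \<longleftrightarrow>
    (\<exists>\<delta>>0. \<forall>p \<tau>. is_partition p c d \<and> fine_partition \<delta> p \<and> partition_tags p \<tau> \<longrightarrow> P (p, \<tau>))"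
  unfolding mesh_filter_def
proof (subst eventually_INF_base)
  fix \<delta> \<delta>' :: real assume "\<delta> \<in> {0<..}" "\<delta>' \<in> {0<..}"
  then show "\<exists>\<delta>''\<in>{0<..}.
      principal {(p, \<tau>). is_partition p c d \<and> fine_partition \<delta>'' p \<and> partition_tags p \<tau>}
      \<le> inf (principal {(p, \<tau>). is_partition p c d \<and> fine_partition \<delta> p \<and> partition_tags p \<tau>})
          (principal {(p, \<tau>). is_partition p c d \<and> fine_partition \<delta>' p \<and> partition_tags p \<tau>})"
    by (intro bexI[of _ "min \<delta> \<delta>'"]) (auto intro: fine_partition_mono)
qed (auto simp: eventually_principal)

lemma eventually_tagged_partition:
  "eventually (\<lambda>(p, \<tau>). is_partition p c d \<and> partition_tags p \<tau>) (mesh_filter c d)"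
  unfolding eventually_mesh_filter by (intro exI[of _ 1]) auto

lemma mesh_filter_neq_bot: "c \<le> d \<Longrightarrow> mesh_filter c d \<noteq> bot"
  unfolding trivial_limit_def eventually_mesh_filter
  by (metis fine_partition_exists partition_tags_left)

lemma has_rs_integral_iff_tendsto:
  "has_rs_integral f g c d I \<longleftrightarrow> ((\<lambda>(p, \<tau>). rs_sum f g p \<tau>) \<longlongrightarrow> I) (mesh_filter c d)"
  unfolding has_rs_integral_def tendsto_iff eventually_mesh_filter dist_real_def by simp

lemma has_rs_integralD:
  assumes "has_rs_integral f g c d I" "\<epsilon> > 0"
  obtains \<delta> where "\<delta> > 0" and "\<And>p \<tau>. is_partition p c d \<Longrightarrow> fine_partition \<delta> p \<Longrightarrow>
    partition_tags p \<tau> \<Longrightarrow> \<bar>rs_sum f g p \<tau> - I\<bar> < \<epsilon>"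
  using assms unfolding has_rs_integral_def by auto

lemma has_rs_integral_unique:
  "has_rs_integral f g c d I \<Longrightarrow> has_rs_integral f g c d J \<Longrightarrow> c \<le> d \<Longrightarrow> I = J"
  unfolding has_rs_integral_iff_tendsto using mesh_filter_neq_bot tendsto_unique by blast

lemma rs_integral_eq: "has_rs_integral f g c d I \<Longrightarrow> c \<le> d \<Longrightarrow> rs_integral f g c d = I"
  unfolding rs_integral_def using has_rs_integral_unique by blast

lemma has_rs_integral_exists:
  fixes f g :: "real \<Rightarrow> real"
  assumes "continuous_on {c..d} f" "bounded_variation_on g c d" "c \<le> d"
  shows "\<exists>I. has_rs_integral f g c d I"
proof -
  let ?S = "\<lambda>(p, \<tau>). rs_sum f g p \<tau>"
  have "cauchy_filter (filtermap ?S (mesh_filter c d))"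
    unfolding cauchy_filter_metric_filtermap
  proof (intro allI impI)
    fix e :: real assume "e > 0"
    then obtain \<delta> where "\<delta> > 0" and close: "\<And>P \<tau> Q \<rho>.
      is_partition P c d \<Longrightarrow> fine_partition \<delta> P \<Longrightarrow> partition_tags P \<tau> \<Longrightarrow>
      is_partition Q c d \<Longrightarrow> fine_partition \<delta> Q \<Longrightarrow> partition_tags Q \<rho> \<Longrightarrow>
      \<bar>rs_sum f g P \<tau> - rs_sum f g Q \<rho>\<bar> \<le> e / 2"
      using rs_sum_cauchy[OF assms(1,2), of "e / 2"] by auto
    show "\<exists>A. eventually A (mesh_filter c d) \<and> (\<forall>x y. A x \<and> A y \<longrightarrow> dist (?S x) (?S y) < e)"
      using \<open>\<delta> > 0\<close> \<open>e > 0\<close> close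
      by (intro exI[of _ "\<lambda>(p, \<tau>). is_partition p c d \<and> fine_partition \<delta> p \<and> partition_tags p \<tau>"])
        (fastforce simp: eventually_mesh_filter dist_real_def)
  qed
  moreover have "filtermap ?S (mesh_filter c d) \<noteq> bot"
    using mesh_filter_neq_bot[OF assms(3)] by (simp add: filtermap_bot_iff)
  ultimately obtain I where "filtermap ?S (mesh_filter c d) \<le> nhds I"
    using complete_UNIV unfolding complete_uniform by auto
  then show ?thesis unfolding has_rs_integral_iff_tendsto filterlim_def by blast
qed

lemma has_rs_integral_rs_integral:
  fixes f g :: "real \<Rightarrow> real"
  assumes "continuous_on {c..d} f" "bounded_variation_on g c d" "c \<le> d"
  shows "has_rs_integral f g c d (rs_integral f g c d)"
  using has_rs_integral_exists[OF assms] rs_integral_eq assms(3) by metis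

lemma power_Suc_diff_lower_bound:
  fixes x y :: real
  assumes "0 \<le> x" "x \<le> y"
  shows "real (Suc k) * x ^ k * (y - x) \<le> y ^ Suc k - x ^ Suc k"
proof (induction k)
  case (Suc k)
  have "real (Suc (Suc k)) * x ^ Suc k * (y - x)
      = x * (real (Suc k) * x ^ k * (y - x)) + x ^ Suc k * (y - x)"
    by (simp add: algebra_simps)
  also have "\<dots> \<le> y * (real (Suc k) * x ^ k * (y - x)) + x ^ Suc k * (y - x)"
    using assms by (intro add_right_mono mult_right_mono) auto
  also have "\<dots> \<le> y * (y ^ Suc k - x ^ Suc k) + x ^ Suc k * (y - x)"
    using Suc assms by (intro add_right_mono mult_left_mono) auto
  also have "\<dots> = y ^ Suc (Suc k) - x ^ Suc (Suc k)" by (simp add: algebra_simps)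
  finally show ?case .
qed simp

lemma rs_sum_left_tags_power_bound:
  fixes f g V :: "real \<Rightarrow> real"
  assumes p: "is_partition p a t"
    and f: "\<And>i. i < length p \<Longrightarrow> \<bar>f (p ! i)\<bar> \<le> V (p ! i) ^ k / fact k"
    and g: "\<And>i. i < length p - 1 \<Longrightarrow> \<bar>g (p ! Suc i) - g (p ! i)\<bar> \<le> V (p ! Suc i) - V (p ! i)"
    and V: "\<And>i. i < length p \<Longrightarrow> 0 \<le> V (p ! i)"
  shows "\<bar>rs_sum f g p (\<lambda>i. p ! i)\<bar> \<le> V t ^ Suc k / fact (Suc k)"
proof -
  define n where "n = length p - 1"
  have lp: "length p = Suc n" using is_partition_length[OF p] n_def by simp
  define h where "h j = V (p ! j) ^ Suc k / fact (Suc k)" for j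
  have "\<bar>f (p ! i) * (g (p ! Suc i) - g (p ! i))\<bar> \<le> h (Suc i) - h i" if i: "i < n" for i
  proof -
    have "\<bar>f (p ! i) * (g (p ! Suc i) - g (p ! i))\<bar>
        \<le> V (p ! i) ^ k / fact k * (V (p ! Suc i) - V (p ! i))"
      unfolding abs_mult using f[of i] g[of i] V[of i] i lp unfolding n_def
      by (intro mult_mono) auto
    also have "\<dots> = real (Suc k) * V (p ! i) ^ k * (V (p ! Suc i) - V (p ! i)) / fact (Suc k)"
      by (simp add: fact_Suc)
    also have "\<dots> \<le> h (Suc i) - h i"
      unfolding h_def diff_divide_distrib[symmetric] using V[of i] g[of i] i lp unfolding n_def
      by (intro divide_right_mono power_Suc_diff_lower_bound) auto
    finally show ?thesis .
  qed
  then have "\<bar>rs_sum f g p (\<lambda>i. p ! i)\<bar> \<le> (\<Sum>i<n. h (Suc i) - h i)"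
    unfolding rs_sum_def n_def[symmetric] by (intro order_trans[OF sum_abs] sum_mono) auto
  also have "\<dots> = h n - h 0" by (rule sum_lessThan_telescope)
  also have "\<dots> \<le> h n" unfolding h_def using V[of 0] lp by simp
  also have "h n = V t ^ Suc k / fact (Suc k)" unfolding h_def n_def using is_partition_last[OF p] by simp
  finally show ?thesis .
qed

lemma has_rs_integral_power_bound:
  fixes f g V :: "real \<Rightarrow> real"
  assumes I: "has_rs_integral f g a t I" and "a \<le> t"
    and f: "\<And>u. u \<in> {a..t} \<Longrightarrow> \<bar>f u\<bar> \<le> V u ^ k / fact k"
    and g: "\<And>x y. a \<le> x \<Longrightarrow> x \<le> y \<Longrightarrow> y \<le> t \<Longrightarrow> \<bar>g y - g x\<bar> \<le> V y - V x"
    and V: "\<And>u. u \<in> {a..t} \<Longrightarrow> 0 \<le> V u"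
  shows "\<bar>I\<bar> \<le> V t ^ Suc k / fact (Suc k)"
proof (rule field_le_epsilon)
  fix e :: real assume "e > 0"
  then obtain \<delta> where "\<delta> > 0" and close: "\<And>p \<tau>. is_partition p a t \<Longrightarrow> fine_partition \<delta> p \<Longrightarrow>
      partition_tags p \<tau> \<Longrightarrow> \<bar>rs_sum f g p \<tau> - I\<bar> < e"
    using has_rs_integralD[OF I] by blast
  then obtain p where p: "is_partition p a t" "fine_partition \<delta> p"
    using fine_partition_exists[OF \<open>a \<le> t\<close>] by blast
  have "\<bar>rs_sum f g p (\<lambda>i. p ! i)\<bar> \<le> V t ^ Suc k / fact (Suc k)"
  proof (rule rs_sum_left_tags_power_bound[OF p(1)])
    fix i assume i: "i < length p - 1"
    then show "\<bar>g (p ! Suc i) - g (p ! i)\<bar> \<le> V (p ! Suc i) - V (p ! i)"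
      using is_partition_bounds[OF p(1), of i] is_partition_bounds[OF p(1), of "Suc i"]
        is_partition_le[OF p(1), of i "Suc i"]
      by (intro g) auto
  qed (use is_partition_bounds[OF p(1)] f V in auto)
  then show "\<bar>I\<bar> \<le> V t ^ Suc k / fact (Suc k) + e"
    using close[OF p partition_tags_left[OF p(1)]] by linarith
qed

lemma rs_sum_left_tags_append:
  assumes "is_partition P a x" "is_partition Q x y"
  shows "rs_sum f g (P @ tl Q) (\<lambda>i. (P @ tl Q) ! i)
    = rs_sum f g P (\<lambda>i. P ! i) + rs_sum f g Q (\<lambda>i. Q ! i)"
  using sum_partition_append[OF assms, of "\<lambda>l r. f l * (g r - g l)"] unfolding rs_sum_def by simp

lemma rs_sum_left_tags_minus_const:
  assumes "is_partition Q x y"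
  shows "rs_sum f g Q (\<lambda>i. Q ! i) - f x * (g y - g x) =
    (\<Sum>j<length Q - 1. (f (Q ! j) - f x) * (g (Q ! Suc j) - g (Q ! j)))"
proof -
  have telescope: "g y - g x = (\<Sum>j<length Q - 1. g (Q ! Suc j) - g (Q ! j))"
    using sum_lessThan_telescope[of "\<lambda>j. g (Q ! j)" "length Q - 1"] is_partition_length[OF assms]
      is_partition_first[OF assms] is_partition_last[OF assms] by simp
  show ?thesis
    unfolding rs_sum_def telescope
    by (simp only: sum_distrib_left sum_subtractf[symmetric] left_diff_distrib)
qed

lemma has_rs_integral_increment:
  fixes f g :: "real \<Rightarrow> real"
  assumes Ix: "has_rs_integral f g a x Ix" and Iy: "has_rs_integral f g a y Iy"
    and "a \<le> x" "x \<le> y" and g: "bounded_variation_on g x y"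
    and osc: "\<And>u. u \<in> {x..y} \<Longrightarrow> \<bar>f u - f x\<bar> \<le> \<eta>"
  shows "\<bar>Iy - Ix - f x * (g y - g x)\<bar> \<le> \<eta> * total_variation g x y"
proof (rule field_le_epsilon)
  fix e :: real assume "e > 0"
  then have "e / 2 > 0" by simp
  then obtain \<delta>x where "\<delta>x > 0" and cx: "\<And>p \<tau>. is_partition p a x \<Longrightarrow>
      fine_partition \<delta>x p \<Longrightarrow> partition_tags p \<tau> \<Longrightarrow> \<bar>rs_sum f g p \<tau> - Ix\<bar> < e / 2"
    using has_rs_integralD[OF Ix] by blast
  obtain \<delta>y where "\<delta>y > 0" and cy: "\<And>p \<tau>. is_partition p a y \<Longrightarrow>
      fine_partition \<delta>y p \<Longrightarrow> partition_tags p \<tau> \<Longrightarrow> \<bar>rs_sum f g p \<tau> - Iy\<bar> < e / 2"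
    using has_rs_integralD[OF Iy \<open>e / 2 > 0\<close>] by blast
  define \<delta> where "\<delta> = min \<delta>x \<delta>y"
  have "\<delta> > 0" using \<open>\<delta>x > 0\<close> \<open>\<delta>y > 0\<close> unfolding \<delta>_def by simp
  obtain P where P: "is_partition P a x" "fine_partition \<delta> P"
    using fine_partition_exists[OF \<open>a \<le> x\<close> \<open>\<delta> > 0\<close>] by blast
  obtain Q where Q: "is_partition Q x y" "fine_partition \<delta> Q"
    using fine_partition_exists[OF \<open>x \<le> y\<close> \<open>\<delta> > 0\<close>] by blast
  have R: "is_partition (P @ tl Q) a y" "fine_partition \<delta> (P @ tl Q)"
    using is_partition_append[OF P(1) Q(1)] fine_partition_append[OF P(1) Q(1) P(2) Q(2)] by auto
  have SP: "\<bar>rs_sum f g P (\<lambda>i. P ! i) - Ix\<bar> < e / 2"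
    using cx[OF P(1) _ partition_tags_left[OF P(1)]] fine_partition_mono[OF P(2)] \<delta>_def by simp
  have SR: "\<bar>rs_sum f g (P @ tl Q) (\<lambda>i. (P @ tl Q) ! i) - Iy\<bar> < e / 2"
    using cy[OF R(1) _ partition_tags_left[OF R(1)]] fine_partition_mono[OF R(2)] \<delta>_def by simp
  have "\<bar>rs_sum f g Q (\<lambda>i. Q ! i) - f x * (g y - g x)\<bar> \<le> \<eta> * variation_sum g Q"
    unfolding rs_sum_left_tags_minus_const[OF Q(1)] variation_sum_def sum_distrib_left
  proof (intro order_trans[OF sum_abs] sum_mono)
    fix j assume "j \<in> {..<length Q - 1}"
    then have "\<bar>f (Q ! j) - f x\<bar> \<le> \<eta>" using osc is_partition_bounds[OF Q(1), of j] by auto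
    then show "\<bar>(f (Q ! j) - f x) * (g (Q ! Suc j) - g (Q ! j))\<bar>
        \<le> \<eta> * norm (g (Q ! Suc j) - g (Q ! j))"
      by (simp add: abs_mult mult_right_mono)
  qed
  also have "\<dots> \<le> \<eta> * total_variation g x y"
    using variation_sum_le_total_variation[OF g Q(1)] osc[of x] \<open>x \<le> y\<close>
    by (intro mult_left_mono) auto
  finally show "\<bar>Iy - Ix - f x * (g y - g x)\<bar> \<le> \<eta> * total_variation g x y + e"
    using SP SR rs_sum_left_tags_append[OF P(1) Q(1), of f g] unfolding abs_le_iff abs_less_iff
    by linarith
qed

lemma indefinite_rs_integral_modulus:
  fixes f g I :: "real \<Rightarrow> real"
  assumes f: "continuous_on {a..b} f" and bv: "bounded_variation_on g a b"
    and I: "\<And>t. t \<in> {a..b} \<Longrightarrow> has_rs_integral f g a t (I t)"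
    and B: "\<And>u. u \<in> {a..b} \<Longrightarrow> \<bar>f u\<bar> \<le> B" and "\<eta> > 0"
  obtains \<rho> where "\<rho> > 0" and "\<And>x y. x \<in> {a..b} \<Longrightarrow> y \<in> {a..b} \<Longrightarrow> \<bar>y - x\<bar> < \<rho> \<Longrightarrow>
    \<bar>I y - I x\<bar> \<le> B * \<bar>g y - g x\<bar> + \<eta> * total_variation g a b"
proof -
  obtain \<rho> where "\<rho> > 0"
    and uc: "\<And>x x'. x \<in> {a..b} \<Longrightarrow> x' \<in> {a..b} \<Longrightarrow> dist x' x < \<rho> \<Longrightarrow> dist (f x') (f x) < \<eta>"
    using compact_uniformly_continuous[OF f compact_Icc] \<open>\<eta> > 0\<close>
    unfolding uniformly_continuous_on_def by metis
  have ordered: "\<bar>I y - I x\<bar> \<le> B * \<bar>g y - g x\<bar> + \<eta> * total_variation g a b"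
    if "x \<in> {a..b}" "y \<in> {a..b}" "x \<le> y" "y - x < \<rho>" for x y
  proof -
    have "\<bar>f u - f x\<bar> \<le> \<eta>" if "u \<in> {x..y}" for u
      using uc[of x u] that \<open>x \<in> {a..b}\<close> \<open>y \<in> {a..b}\<close> \<open>y - x < \<rho>\<close> by (simp add: dist_real_def)
    then have "\<bar>I y - I x - f x * (g y - g x)\<bar> \<le> \<eta> * total_variation g x y"
      using that bounded_variation_on_subinterval[OF bv]
      by (intro has_rs_integral_increment[OF I I]) auto
    also have "\<dots> \<le> \<eta> * total_variation g a b"
      using total_variation_subinterval_le[OF bv] that \<open>\<eta> > 0\<close> by simp
    moreover have "\<bar>f x * (g y - g x)\<bar> \<le> B * \<bar>g y - g x\<bar>"
      unfolding abs_mult using B[of x] that by (simp add: mult_right_mono)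
    ultimately show ?thesis unfolding abs_le_iff by linarith
  qed
  show ?thesis
  proof (rule that[OF \<open>\<rho> > 0\<close>])
    fix x y assume "x \<in> {a..b}" "y \<in> {a..b}" "\<bar>y - x\<bar> < \<rho>"
    then show "\<bar>I y - I x\<bar> \<le> B * \<bar>g y - g x\<bar> + \<eta> * total_variation g a b"
      using ordered[of x y] ordered[of y x] by (cases "x \<le> y") (auto simp: abs_minus_commute)
  qed
qed

lemma continuous_on_indefinite_rs_integral:
  fixes f g I :: "real \<Rightarrow> real"
  assumes f: "continuous_on {a..b} f" and g: "continuous_on {a..b} g"
    and bv: "bounded_variation_on g a b"
    and I: "\<And>t. t \<in> {a..b} \<Longrightarrow> has_rs_integral f g a t (I t)"
  shows "continuous_on {a..b} I"
  unfolding continuous_on_iff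
proof (intro ballI allI impI)
  fix x0 e :: real assume x0: "x0 \<in> {a..b}" and "e > 0"
  obtain B where "B > 0" and B: "\<And>u. u \<in> {a..b} \<Longrightarrow> \<bar>f u\<bar> \<le> B"
    using compact_imp_bounded[OF compact_continuous_image[OF f compact_Icc]]
    unfolding bounded_pos by auto
  define M where "M = total_variation g a b"
  define \<eta> where "\<eta> = e / (4 * (\<bar>M\<bar> + 1))"
  have "\<eta> > 0" using \<open>e > 0\<close> unfolding \<eta>_def by (simp add: add_pos_nonneg)
  have "\<eta> * M \<le> \<eta> * (\<bar>M\<bar> + 1)" using \<open>\<eta> > 0\<close> by (intro mult_left_mono) auto
  also have "\<dots> = e / 4" unfolding \<eta>_def by (simp add: field_simps)
  finally have \<eta>M: "\<eta> * M \<le> e / 4" .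
  obtain \<rho> where "\<rho> > 0" and \<rho>: "\<And>x y. x \<in> {a..b} \<Longrightarrow> y \<in> {a..b} \<Longrightarrow> \<bar>y - x\<bar> < \<rho> \<Longrightarrow>
      \<bar>I y - I x\<bar> \<le> B * \<bar>g y - g x\<bar> + \<eta> * M"
    using indefinite_rs_integral_modulus[OF f bv I B \<open>\<eta> > 0\<close>] unfolding M_def by blast
  obtain d where "d > 0"
    and d: "\<And>x. x \<in> {a..b} \<Longrightarrow> dist x x0 < d \<Longrightarrow> dist (g x) (g x0) < e / (2 * B)"
    using g x0 \<open>e > 0\<close> \<open>B > 0\<close> unfolding continuous_on_iff
    by (metis divide_pos_pos mult_pos_pos zero_less_numeral)
  show "\<exists>d>0. \<forall>x\<in>{a..b}. dist x x0 < d \<longrightarrow> dist (I x) (I x0) < e"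
  proof (intro exI[of _ "min \<rho> d"] conjI ballI impI)
    fix x assume x: "x \<in> {a..b}" and "dist x x0 < min \<rho> d"
    then have "B * \<bar>g x - g x0\<bar> \<le> e / 2"
      using d[of x] \<open>B > 0\<close> by (simp add: dist_real_def field_simps)
    then show "dist (I x) (I x0) < e"
      using \<rho>[OF x0 x] \<open>dist x x0 < min \<rho> d\<close> \<eta>M \<open>e > 0\<close> by (simp add: dist_real_def abs_minus_commute)
  qed (use \<open>\<rho> > 0\<close> \<open>d > 0\<close> in simp)
qed

section \<open>Signature coordinates\<close>

context
  fixes \<gamma> :: "real \<Rightarrow> 'v::euclidean_space" and a b :: real
  assumes \<gamma>_cont: "continuous_on {a..b} \<gamma>" and \<gamma>_bv: "bounded_variation_on \<gamma> a b"
begin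

lemma has_rs_integral_sig_rev_Cons:
  assumes "continuous_on {a..b} (sig_rev \<gamma> a w)" "t \<in> {a..b}"
  shows "has_rs_integral (sig_rev \<gamma> a w) (\<lambda>u. \<gamma> u \<bullet> e) a t (sig_rev \<gamma> a (e # w) t)"
  unfolding sig_rev.simps using assms
  by (intro has_rs_integral_rs_integral bounded_variation_on_inner
      bounded_variation_on_subinterval[OF \<gamma>_bv] continuous_on_subset[OF assms(1)]) auto

lemma continuous_on_sig_rev: "continuous_on {a..b} (sig_rev \<gamma> a w)"
proof (induction w)
  case (Cons e w)
  show ?case
  proof (rule continuous_on_indefinite_rs_integral[OF Cons.IH])
    show "continuous_on {a..b} (\<lambda>u. \<gamma> u \<bullet> e)"
      by (intro continuous_on_inner \<gamma>_cont continuous_on_const)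
  qed (auto intro: bounded_variation_on_inner[OF \<gamma>_bv] has_rs_integral_sig_rev_Cons[OF Cons.IH]
      simp del: sig_rev.simps)
qed simp

lemma abs_sig_rev_le:
  assumes "set w \<subseteq> Basis" "t \<in> {a..b}"
  shows "\<bar>sig_rev \<gamma> a w t\<bar> \<le> total_variation \<gamma> a t ^ length w / fact (length w)"
  using assms
proof (induction w arbitrary: t)
  case (Cons e w)
  note integral = has_rs_integral_sig_rev_Cons[OF continuous_on_sig_rev Cons.prems(2)]
  have "\<bar>sig_rev \<gamma> a (e # w) t\<bar> \<le> total_variation \<gamma> a t ^ Suc (length w) / fact (Suc (length w))"
  proof (rule has_rs_integral_power_bound[OF integral])
    show "\<bar>sig_rev \<gamma> a w u\<bar> \<le> total_variation \<gamma> a u ^ length w / fact (length w)" if "u \<in> {a..t}" for u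
      using Cons that by auto
    show "0 \<le> total_variation \<gamma> a u" if "u \<in> {a..t}" for u
      using that Cons.prems(2) bounded_variation_on_subinterval[OF \<gamma>_bv]
      by (intro total_variation_nonneg) auto
    fix x y assume xy: "a \<le> x" "x \<le> y" "y \<le> t"
    have "\<bar>\<gamma> y \<bullet> e - \<gamma> x \<bullet> e\<bar> \<le> norm (\<gamma> y - \<gamma> x)"
      using Basis_le_norm[of e "\<gamma> y - \<gamma> x"] Cons.prems(1) by (simp add: inner_diff_left)
    also have "\<dots> \<le> total_variation \<gamma> a y - total_variation \<gamma> a x"
      using total_variation_add_norm_le[OF bounded_variation_on_subinterval[OF \<gamma>_bv] xy(1,2)]
        xy Cons.prems(2) by simp
    finally show "\<bar>\<gamma> y \<bullet> e - \<gamma> x \<bullet> e\<bar> \<le> total_variation \<gamma> a y - total_variation \<gamma> a x" .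
  qed (use Cons.prems in simp)
  then show ?case by simp
qed simp

lemma sig_coord_eq_sig_rev: "sig_coord \<gamma> a w = sig_rev \<gamma> a (rev w)"
  by (simp add: fun_eq_iff sig_coord_def)

lemma has_rs_integral_sig_coord_snoc:
  "t \<in> {a..b} \<Longrightarrow> has_rs_integral (sig_coord \<gamma> a w) (\<lambda>u. \<gamma> u \<bullet> e) a t (sig_coord \<gamma> a (w @ [e]) t)"
  using has_rs_integral_sig_rev_Cons[OF continuous_on_sig_rev, of t "rev w" e]
  by (simp add: sig_coord_eq_sig_rev del: sig_rev.simps)

lemma abs_sig_coord_le:
  assumes "w \<in> words k" "t \<in> {a..b}"
  shows "\<bar>sig_coord \<gamma> a w t\<bar> \<le> total_variation \<gamma> a b ^ k / fact k"
proof -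
  have "\<bar>sig_coord \<gamma> a w t\<bar> \<le> total_variation \<gamma> a t ^ k / fact k"
    using abs_sig_rev_le[of "rev w" t] assms unfolding sig_coord_eq_sig_rev words_def by auto
  also have "\<dots> \<le> total_variation \<gamma> a b ^ k / fact k"
    using assms(2) total_variation_nonneg[OF bounded_variation_on_subinterval[OF \<gamma>_bv]]
      total_variation_subinterval_le[OF \<gamma>_bv]
    by (intro divide_right_mono power_mono) auto
  finally show ?thesis .
qed

end

lemma words_0: "words 0 = {[]}"
  unfolding words_def by auto

lemma words_Suc: "words (Suc k) = (\<lambda>(w, e). w @ [e]) ` (words k \<times> (Basis :: 'v::euclidean_space set))"
proof
  show "words (Suc k) \<subseteq> (\<lambda>(w, e). w @ [e]) ` (words k \<times> (Basis :: 'v set))"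
  proof
    fix x :: "'v list" assume "x \<in> words (Suc k)"
    then obtain w e where "x = w @ [e]" "length w = k" "set x \<subseteq> Basis"
      unfolding words_def length_Suc_conv_rev by blast
    then show "x \<in> (\<lambda>(w, e). w @ [e]) ` (words k \<times> Basis)"
      unfolding words_def by (auto intro!: image_eqI[of _ _ "(w, e)"])
  qed
qed (auto simp: words_def)

lemma card_words: "card (words k :: 'v::euclidean_space list set) = DIM('v) ^ k"
proof -
  have "words k = {w. set w \<subseteq> (Basis :: 'v set) \<and> length w = k}" unfolding words_def by auto
  then show ?thesis using card_lists_length_eq[of "Basis :: 'v set" k] by simp
qed

lemma sig_inner_0: "sig_inner 0 \<gamma> \<sigma> a s t = 1"
  unfolding sig_inner_def sig_coord_def words_0 by simp

lemma sig_inner_Suc: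
  "sig_inner (Suc k) \<gamma> \<sigma> a s t =
    (\<Sum>w\<in>words k. \<Sum>e\<in>Basis. sig_coord \<gamma> a (w @ [e]) s * sig_coord \<sigma> a (w @ [e]) t)"
proof -
  have inj: "inj_on (\<lambda>(w, e). w @ [e]) (words k \<times> Basis)" by (auto simp: inj_on_def)
  have "sig_inner (Suc k) \<gamma> \<sigma> a s t =
      (\<Sum>(w, e)\<in>words k \<times> Basis. sig_coord \<gamma> a (w @ [e]) s * sig_coord \<sigma> a (w @ [e]) t)"
    unfolding sig_inner_def words_Suc sum.reindex[OF inj] by (simp add: comp_def case_prod_beta)
  then show ?thesis by (simp add: sum.cartesian_product)
qed

section \<open>Double Riemann--Stieltjes integrals\<close>

lemma rs2_sum_sum:
  "rs2_sum (\<lambda>u v. \<Sum>i\<in>S. K i u v) \<gamma> \<sigma> p \<tau> q \<rho> = (\<Sum>i\<in>S. rs2_sum (K i) \<gamma> \<sigma> p \<tau> q \<rho>)"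
  unfolding rs2_sum_def sum_distrib_right
  by (subst sum.swap) (simp add: sum.swap[where A = S])

lemma rs2_sum_cmult: "rs2_sum (\<lambda>u v. c * K u v) \<gamma> \<sigma> p \<tau> q \<rho> = c * rs2_sum K \<gamma> \<sigma> p \<tau> q \<rho>"
  unfolding rs2_sum_def by (simp add: sum_distrib_left mult.assoc)

lemma rs2_sum_diff:
  "rs2_sum (\<lambda>u v. K u v - L u v) \<gamma> \<sigma> p \<tau> q \<rho> = rs2_sum K \<gamma> \<sigma> p \<tau> q \<rho> - rs2_sum L \<gamma> \<sigma> p \<tau> q \<rho>"
  unfolding rs2_sum_def by (simp add: sum_subtractf left_diff_distrib)

lemma rs2_sum_product:
  fixes \<gamma> \<sigma> :: "real \<Rightarrow> 'v::euclidean_space"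
  shows "rs2_sum (\<lambda>u v. F u * G v) \<gamma> \<sigma> p \<tau> q \<rho> =
    (\<Sum>e\<in>Basis. rs_sum F (\<lambda>u. \<gamma> u \<bullet> e) p \<tau> * rs_sum G (\<lambda>u. \<sigma> u \<bullet> e) q \<rho>)"
proof -
  define X where "X i e = F (\<tau> i) * (\<gamma> (p ! Suc i) \<bullet> e - \<gamma> (p ! i) \<bullet> e)" for i e
  define Y where "Y j e = G (\<rho> j) * (\<sigma> (q ! Suc j) \<bullet> e - \<sigma> (q ! j) \<bullet> e)" for j e
  have "F (\<tau> i) * G (\<rho> j) * ((\<gamma> (p ! Suc i) - \<gamma> (p ! i)) \<bullet> (\<sigma> (q ! Suc j) - \<sigma> (q ! j)))
      = (\<Sum>e\<in>Basis. X i e * Y j e)" for i j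
    unfolding X_def Y_def
    by (subst euclidean_inner) (simp add: inner_diff_left sum_distrib_left mult_ac)
  then have "rs2_sum (\<lambda>u v. F u * G v) \<gamma> \<sigma> p \<tau> q \<rho> =
      (\<Sum>i<length p - 1. \<Sum>j<length q - 1. \<Sum>e\<in>Basis. X i e * Y j e)"
    unfolding rs2_sum_def by simp
  also have "\<dots> = (\<Sum>e\<in>Basis. \<Sum>i<length p - 1. \<Sum>j<length q - 1. X i e * Y j e)"
    by (simp add: sum.swap[where B = Basis])
  also have "\<dots> = (\<Sum>e\<in>Basis. rs_sum F (\<lambda>u. \<gamma> u \<bullet> e) p \<tau> * rs_sum G (\<lambda>u. \<sigma> u \<bullet> e) q \<rho>)"
    unfolding rs_sum_def X_def Y_def by (simp add: sum_product)
  finally show ?thesis .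
qed

lemma abs_rs2_sum_le:
  assumes "\<And>i j. i < length p - 1 \<Longrightarrow> j < length q - 1 \<Longrightarrow> \<bar>K (\<tau> i) (\<rho> j)\<bar> \<le> B"
  shows "\<bar>rs2_sum K \<gamma> \<sigma> p \<tau> q \<rho>\<bar> \<le> B * variation_sum \<gamma> p * variation_sum \<sigma> q"
proof -
  have "\<bar>rs2_sum K \<gamma> \<sigma> p \<tau> q \<rho>\<bar> \<le> (\<Sum>i<length p - 1. \<Sum>j<length q - 1.
      B * (norm (\<gamma> (p ! Suc i) - \<gamma> (p ! i)) * norm (\<sigma> (q ! Suc j) - \<sigma> (q ! j))))"
    unfolding rs2_sum_def
  proof (intro order_trans[OF sum_abs] sum_mono order_trans[OF sum_abs])
    fix i j assume "i \<in> {..<length p - 1}" "j \<in> {..<length q - 1}"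
    then have "\<bar>K (\<tau> i) (\<rho> j)\<bar> \<le> B" using assms by simp
    then show "\<bar>K (\<tau> i) (\<rho> j) * ((\<gamma> (p ! Suc i) - \<gamma> (p ! i)) \<bullet> (\<sigma> (q ! Suc j) - \<sigma> (q ! j)))\<bar>
      \<le> B * (norm (\<gamma> (p ! Suc i) - \<gamma> (p ! i)) * norm (\<sigma> (q ! Suc j) - \<sigma> (q ! j)))"
      unfolding abs_mult by (intro mult_mono Cauchy_Schwarz_ineq2) auto
  qed
  also have "\<dots> = B * variation_sum \<gamma> p * variation_sum \<sigma> q"
    unfolding variation_sum_def by (simp add: sum_product sum_distrib_left mult_ac)
  finally show ?thesis .
qed

lemma has_rs2_integral_iff_tendsto:
  "has_rs2_integral K \<gamma> \<sigma> c d c' d' I \<longleftrightarrow>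
    ((\<lambda>((p, \<tau>), (q, \<rho>)). rs2_sum K \<gamma> \<sigma> p \<tau> q \<rho>) \<longlongrightarrow> I) (mesh_filter c d \<times>\<^sub>F mesh_filter c' d')"
  (is "_ \<longleftrightarrow> (?S \<longlongrightarrow> I) ?F")
proof
  assume I: "has_rs2_integral K \<gamma> \<sigma> c d c' d' I"
  show "(?S \<longlongrightarrow> I) ?F"
  proof (rule tendstoI)
    fix \<epsilon> :: real assume "\<epsilon> > 0"
    then obtain \<delta> where "\<delta> > 0" and \<delta>: "\<And>p \<tau> q \<rho>.
      is_partition p c d \<and> fine_partition \<delta> p \<and> partition_tags p \<tau> \<and>
      is_partition q c' d' \<and> fine_partition \<delta> q \<and> partition_tags q \<rho> \<Longrightarrow>
      \<bar>rs2_sum K \<gamma> \<sigma> p \<tau> q \<rho> - I\<bar> < \<epsilon>"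
      using I unfolding has_rs2_integral_def by meson
    show "eventually (\<lambda>x. dist (?S x) I < \<epsilon>) ?F"
      unfolding eventually_prod_filter eventually_mesh_filter
      using \<open>\<delta> > 0\<close> \<delta>
      by (intro exI[of _ "\<lambda>(p, \<tau>). is_partition p _ _ \<and> fine_partition \<delta> p \<and> partition_tags p \<tau>"]
          conjI)
        (auto simp: dist_real_def)
  qed
next
  assume "(?S \<longlongrightarrow> I) ?F"
  show "has_rs2_integral K \<gamma> \<sigma> c d c' d' I"
    unfolding has_rs2_integral_def
  proof (intro allI impI)
    fix \<epsilon> :: real assume "\<epsilon> > 0"
    then obtain A B where "eventually A (mesh_filter c d)" "eventually B (mesh_filter c' d')"
      and AB: "\<And>x y. A x \<Longrightarrow> B y \<Longrightarrow> dist (?S (x, y)) I < \<epsilon>"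
      using tendstoD[OF \<open>(?S \<longlongrightarrow> I) ?F\<close>] unfolding eventually_prod_filter by metis
    then obtain \<delta> \<delta>' where "\<delta> > 0" "\<delta>' > 0"
      and A: "\<And>p \<tau>. is_partition p c d \<and> fine_partition \<delta> p \<and> partition_tags p \<tau> \<Longrightarrow> A (p, \<tau>)"
      and B: "\<And>q \<rho>. is_partition q c' d' \<and> fine_partition \<delta>' q \<and> partition_tags q \<rho> \<Longrightarrow> B (q, \<rho>)"
      unfolding eventually_mesh_filter by metis
    show "\<exists>\<delta>>0. \<forall>p \<tau> q \<rho>. is_partition p c d \<and> fine_partition \<delta> p \<and> partition_tags p \<tau> \<and>
        is_partition q c' d' \<and> fine_partition \<delta> q \<and> partition_tags q \<rho> \<longrightarrow>
        \<bar>rs2_sum K \<gamma> \<sigma> p \<tau> q \<rho> - I\<bar> < \<epsilon>"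
      using \<open>\<delta> > 0\<close> \<open>\<delta>' > 0\<close> A B AB
      by (intro exI[of _ "min \<delta> \<delta>'"]) (force simp: dist_real_def intro: fine_partition_mono)
  qed
qed

lemma has_rs2_integral_product:
  fixes \<gamma> \<sigma> :: "real \<Rightarrow> 'v::euclidean_space"
  assumes "\<And>e. e \<in> Basis \<Longrightarrow> has_rs_integral F (\<lambda>u. \<gamma> u \<bullet> e) c d (I e)"
    and "\<And>e. e \<in> Basis \<Longrightarrow> has_rs_integral G (\<lambda>u. \<sigma> u \<bullet> e) c' d' (J e)"
  shows "has_rs2_integral (\<lambda>u v. F u * G v) \<gamma> \<sigma> c d c' d' (\<Sum>e\<in>Basis. I e * J e)"
proof -
  have "((\<lambda>x. \<Sum>e\<in>Basis. (\<lambda>(p, \<tau>). rs_sum F (\<lambda>u. \<gamma> u \<bullet> e) p \<tau>) (fst x) *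
      (\<lambda>(q, \<rho>). rs_sum G (\<lambda>u. \<sigma> u \<bullet> e) q \<rho>) (snd x)) \<longlongrightarrow> (\<Sum>e\<in>Basis. I e * J e))
      (mesh_filter c d \<times>\<^sub>F mesh_filter c' d')"
    using assms unfolding has_rs_integral_iff_tendsto
    by (intro tendsto_sum tendsto_mult filterlim_compose[OF _ filterlim_fst]
        filterlim_compose[OF _ filterlim_snd])
  then show ?thesis
    unfolding has_rs2_integral_iff_tendsto rs2_sum_product by (simp add: case_prod_beta')
qed

lemma has_rs2_integral_sum:
  assumes "\<And>i. i \<in> S \<Longrightarrow> has_rs2_integral (K i) \<gamma> \<sigma> c d c' d' (I i)"
  shows "has_rs2_integral (\<lambda>u v. \<Sum>i\<in>S. K i u v) \<gamma> \<sigma> c d c' d' (\<Sum>i\<in>S. I i)"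
  using assms unfolding has_rs2_integral_iff_tendsto rs2_sum_sum
  by (simp add: case_prod_beta' tendsto_sum)

lemma has_rs2_integral_cmult:
  "has_rs2_integral K \<gamma> \<sigma> c d c' d' I \<Longrightarrow> has_rs2_integral (\<lambda>u v. k * K u v) \<gamma> \<sigma> c d c' d' (k * I)"
  unfolding has_rs2_integral_iff_tendsto rs2_sum_cmult by (simp add: case_prod_beta' tendsto_mult_left)

lemma rs2_sum_diff_bound:
  assumes \<gamma>: "bounded_variation_on \<gamma> c d" and \<sigma>: "bounded_variation_on \<sigma> c' d'"
    and p: "is_partition p c d" "partition_tags p \<tau>" and q: "is_partition q c' d'" "partition_tags q \<rho>"
    and KL: "\<And>u v. u \<in> {c..d} \<Longrightarrow> v \<in> {c'..d'} \<Longrightarrow> \<bar>K u v - L u v\<bar> \<le> \<epsilon>" and "0 \<le> \<epsilon>"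
  shows "\<bar>rs2_sum K \<gamma> \<sigma> p \<tau> q \<rho> - rs2_sum L \<gamma> \<sigma> p \<tau> q \<rho>\<bar>
    \<le> \<epsilon> * total_variation \<gamma> c d * total_variation \<sigma> c' d'"
proof -
  have "\<bar>rs2_sum K \<gamma> \<sigma> p \<tau> q \<rho> - rs2_sum L \<gamma> \<sigma> p \<tau> q \<rho>\<bar> \<le> \<epsilon> * variation_sum \<gamma> p * variation_sum \<sigma> q"
    unfolding rs2_sum_diff[symmetric] using partition_tags_bounds[OF p] partition_tags_bounds[OF q]
    by (intro abs_rs2_sum_le KL) auto
  also have "\<dots> \<le> \<epsilon> * total_variation \<gamma> c d * total_variation \<sigma> c' d'"
    using variation_sum_le_total_variation[OF \<gamma> p(1)] variation_sum_le_total_variation[OF \<sigma> q(1)]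
      variation_sum_nonneg[of \<gamma> p] variation_sum_nonneg[of \<sigma> q] \<open>0 \<le> \<epsilon>\<close>
    unfolding mult.assoc by (intro mult_left_mono mult_mono) auto
  finally show ?thesis .
qed

lemma has_rs2_integral_uniform_limit:
  fixes K :: "nat \<Rightarrow> real \<Rightarrow> real \<Rightarrow> real"
  assumes K: "\<And>n. has_rs2_integral (K n) \<gamma> \<sigma> c d c' d' (I n)" and I: "I \<longlonglongrightarrow> J"
    and KL: "uniform_limit ({c..d} \<times> {c'..d'})
      (\<lambda>n x. K n (fst x) (snd x)) (\<lambda>x. L (fst x) (snd x)) sequentially"
    and \<gamma>: "bounded_variation_on \<gamma> c d" and \<sigma>: "bounded_variation_on \<sigma> c' d'"
  shows "has_rs2_integral L \<gamma> \<sigma> c d c' d' J"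
proof -
  define S where "S K = (\<lambda>((p, \<tau>), (q, \<rho>)). rs2_sum K \<gamma> \<sigma> p \<tau> q \<rho>)" for K
  define T where "T = {((p, \<tau>), (q, \<rho>)).
    is_partition p c d \<and> partition_tags p \<tau> \<and> is_partition q c' d' \<and> partition_tags q \<rho>}"
  define V where "V = total_variation \<gamma> c d * total_variation \<sigma> c' d'"
  have "uniform_limit T (\<lambda>n. S (K n)) (S L) sequentially"
  proof (rule uniform_limitI)
    fix \<epsilon> :: real assume "\<epsilon> > 0"
    \<comment> \<open>\<open>\<bar>V\<bar>\<close> rather than \<open>V\<close>: total variations over empty intervals are junk values\<close>
    define \<epsilon>' where "\<epsilon>' = \<epsilon> / (\<bar>V\<bar> + 1)"
    have "\<epsilon>' > 0" using \<open>\<epsilon> > 0\<close> unfolding \<epsilon>'_def by (simp add: add_nonneg_pos)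
    then have "\<epsilon>' * V < \<epsilon>' * (\<bar>V\<bar> + 1)" by (intro mult_strict_left_mono) auto
    then have "\<epsilon>' * V < \<epsilon>" unfolding \<epsilon>'_def by simp
    show "\<forall>\<^sub>F n in sequentially. \<forall>x\<in>T. dist (S (K n) x) (S L x) < \<epsilon>"
      using uniform_limitD[OF KL \<open>\<epsilon>' > 0\<close>]
    proof (rule eventually_mono)
      fix n assume "\<forall>x\<in>{c..d} \<times> {c'..d'}. dist (K n (fst x) (snd x)) (L (fst x) (snd x)) < \<epsilon>'"
      then have "\<bar>K n u v - L u v\<bar> \<le> \<epsilon>'" if "u \<in> {c..d}" "v \<in> {c'..d'}" for u v
        using that by (force simp: dist_real_def)
      then have "\<bar>rs2_sum (K n) \<gamma> \<sigma> p \<tau> q \<rho> - rs2_sum L \<gamma> \<sigma> p \<tau> q \<rho>\<bar> < \<epsilon>"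
        if "is_partition p c d" "partition_tags p \<tau>" "is_partition q c' d'" "partition_tags q \<rho>"
        for p \<tau> q \<rho>
        using rs2_sum_diff_bound[OF \<gamma> \<sigma> that, of "K n" L \<epsilon>'] \<open>\<epsilon>' > 0\<close> \<open>\<epsilon>' * V < \<epsilon>\<close>
        unfolding V_def mult.assoc by simp
      then show "\<forall>x\<in>T. dist (S (K n) x) (S L x) < \<epsilon>"
        unfolding T_def S_def dist_real_def by auto
    qed
  qed
  moreover have "\<forall>\<^sub>F x in mesh_filter c d \<times>\<^sub>F mesh_filter c' d'. x \<in> T"
    using eventually_prodI[OF eventually_tagged_partition eventually_tagged_partition]
    by (rule eventually_mono) (auto simp: T_def)
  moreover have "\<forall>\<^sub>F n in sequentially. (S (K n) \<longlongrightarrow> I n) (mesh_filter c d \<times>\<^sub>F mesh_filter c' d')"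
    using K unfolding has_rs2_integral_iff_tendsto S_def by simp
  ultimately have "(S L \<longlongrightarrow> J) (mesh_filter c d \<times>\<^sub>F mesh_filter c' d')"
    by (intro swap_uniform_limit'[OF _ I]) auto
  then show ?thesis unfolding has_rs2_integral_iff_tendsto S_def .
qed

section \<open>The signature kernel\<close>

context
  fixes \<gamma> \<sigma> :: "real \<Rightarrow> 'v::euclidean_space" and a b :: real
  assumes \<gamma>_cont: "continuous_on {a..b} \<gamma>" and \<sigma>_cont: "continuous_on {a..b} \<sigma>"
    and \<gamma>_bv: "bounded_variation_on \<gamma> a b" and \<sigma>_bv: "bounded_variation_on \<sigma> a b"
begin

lemma abs_sig_inner_le:
  assumes "u \<in> {a..b}" "v \<in> {a..b}"
  shows "\<bar>sig_inner k \<gamma> \<sigma> a u v\<bar> \<le>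
    (real DIM('v) * total_variation \<gamma> a b * total_variation \<sigma> a b) ^ k / (fact k)\<^sup>2"
proof -
  have "\<bar>sig_inner k \<gamma> \<sigma> a u v\<bar> \<le> (\<Sum>w\<in>(words k :: 'v list set).
      total_variation \<gamma> a b ^ k / fact k * (total_variation \<sigma> a b ^ k / fact k))"
    unfolding sig_inner_def
  proof (rule order_trans[OF sum_abs], rule sum_mono)
    fix w :: "'v list" assume "w \<in> words k"
    then show "\<bar>sig_coord \<gamma> a w u * sig_coord \<sigma> a w v\<bar>
        \<le> total_variation \<gamma> a b ^ k / fact k * (total_variation \<sigma> a b ^ k / fact k)"
      unfolding abs_mult
      using abs_sig_coord_le[OF \<gamma>_cont \<gamma>_bv _ assms(1)] abs_sig_coord_le[OF \<sigma>_cont \<sigma>_bv _ assms(2)]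
      by (intro mult_mono) (auto intro: order_trans[OF abs_ge_zero])
  qed
  also have "\<dots> = (real DIM('v) * total_variation \<gamma> a b * total_variation \<sigma> a b) ^ k / (fact k)\<^sup>2"
    by (simp add: card_words power_mult_distrib power2_eq_square)
  finally show ?thesis .
qed

lemma has_rs2_integral_sig_inner:
  assumes "s \<in> {a..b}" "t \<in> {a..b}"
  shows "has_rs2_integral (sig_inner k \<gamma> \<sigma> a) \<gamma> \<sigma> a s a t (sig_inner (Suc k) \<gamma> \<sigma> a s t)"
proof -
  have "has_rs2_integral (\<lambda>u v. \<Sum>w\<in>words k. sig_coord \<gamma> a w u * sig_coord \<sigma> a w v) \<gamma> \<sigma> a s a t
      (\<Sum>w\<in>words k. \<Sum>e\<in>Basis. sig_coord \<gamma> a (w @ [e]) s * sig_coord \<sigma> a (w @ [e]) t)"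
    using has_rs_integral_sig_coord_snoc[OF \<gamma>_cont \<gamma>_bv assms(1)]
      has_rs_integral_sig_coord_snoc[OF \<sigma>_cont \<sigma>_bv assms(2)]
    by (intro has_rs2_integral_sum has_rs2_integral_product)
  then show ?thesis unfolding sig_inner_Suc by (simp add: sig_inner_def[abs_def])
qed

lemma sig_kernel_terms_dominated:
  assumes "\<And>C. C > 0 \<Longrightarrow> summable (\<lambda>k. C ^ k * \<bar>\<psi> k\<bar> / (fact k)\<^sup>2)"
  obtains M where "summable M"
    and "\<And>k u v. u \<in> {a..b} \<Longrightarrow> v \<in> {a..b} \<Longrightarrow> norm (sig_kernel_terms \<psi> \<gamma> \<sigma> a u v k) \<le> M k"
proof -
  define C where "C = \<bar>real DIM('v) * total_variation \<gamma> a b * total_variation \<sigma> a b\<bar> + 1"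
  have "C > 0" unfolding C_def by (simp add: add_nonneg_pos)
  show ?thesis
  proof (rule that[OF assms[OF \<open>C > 0\<close>]])
    fix k u v assume uv: "u \<in> {a..b}" "v \<in> {a..b}"
    have "\<bar>sig_inner k \<gamma> \<sigma> a u v\<bar> \<le> C ^ k / (fact k)\<^sup>2"
    proof (rule order_trans[OF abs_sig_inner_le[OF uv]], rule divide_right_mono)
      show "(real DIM('v) * total_variation \<gamma> a b * total_variation \<sigma> a b) ^ k \<le> C ^ k"
        unfolding C_def by (rule order_trans[OF abs_ge_self]) (simp add: power_abs power_mono)
    qed simp
    then have "\<bar>\<psi> k\<bar> * \<bar>sig_inner k \<gamma> \<sigma> a u v\<bar> \<le> \<bar>\<psi> k\<bar> * (C ^ k / (fact k)\<^sup>2)"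
      by (rule mult_left_mono) simp
    then show "norm (sig_kernel_terms \<psi> \<gamma> \<sigma> a u v k) \<le> C ^ k * \<bar>\<psi> k\<bar> / (fact k)\<^sup>2"
      unfolding sig_kernel_terms_def real_norm_def abs_mult by (simp add: mult.commute)
  qed
qed

lemma summable_sig_kernel_terms:
  assumes "\<And>C. C > 0 \<Longrightarrow> summable (\<lambda>k. C ^ k * \<bar>\<psi> k\<bar> / (fact k)\<^sup>2)" "u \<in> {a..b}" "v \<in> {a..b}"
  shows "summable (sig_kernel_terms \<psi> \<gamma> \<sigma> a u v)"
  using sig_kernel_terms_dominated[OF assms(1)] assms(2,3) summable_comparison_test' by metis

lemma uniform_limit_sig_kernel:
  assumes "\<And>C. C > 0 \<Longrightarrow> summable (\<lambda>k. C ^ k * \<bar>\<psi> k\<bar> / (fact k)\<^sup>2)"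
  shows "uniform_limit ({a..b} \<times> {a..b})
    (\<lambda>n x. \<Sum>k<n. sig_kernel_terms \<psi> \<gamma> \<sigma> a (fst x) (snd x) k)
    (\<lambda>x. sig_kernel \<psi> \<gamma> \<sigma> a (fst x) (snd x)) sequentially"
proof -
  obtain M where "summable M"
    and M: "\<And>k u v. u \<in> {a..b} \<Longrightarrow> v \<in> {a..b} \<Longrightarrow> norm (sig_kernel_terms \<psi> \<gamma> \<sigma> a u v k) \<le> M k"
    using sig_kernel_terms_dominated[OF assms] by blast
  show ?thesis
    unfolding sig_kernel_def
  proof (rule Weierstrass_m_test[OF _ \<open>summable M\<close>])
    fix k and x :: "real \<times> real" assume "x \<in> {a..b} \<times> {a..b}"
    then show "norm (sig_kernel_terms \<psi> \<gamma> \<sigma> a (fst x) (snd x) k) \<le> M k" by (intro M) auto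
  qed
qed

lemma has_rs2_integral_sig_kernel:
  assumes growth: "\<And>C. C > 0 \<Longrightarrow> summable (\<lambda>k. C ^ k * \<bar>\<phi> k\<bar> / (fact k)\<^sup>2)"
    and growth_Suc: "\<And>C. C > 0 \<Longrightarrow> summable (\<lambda>k. C ^ k * \<bar>\<phi> (Suc k)\<bar> / (fact k)\<^sup>2)"
    and s: "s \<in> {a..b}" and t: "t \<in> {a..b}"
  shows "has_rs2_integral (sig_kernel (\<lambda>k. \<phi> (Suc k)) \<gamma> \<sigma> a) \<gamma> \<sigma> a s a t
    (sig_kernel \<phi> \<gamma> \<sigma> a s t - \<phi> 0)"
proof (rule has_rs2_integral_uniform_limit)
  let ?T = "sig_kernel_terms \<phi> \<gamma> \<sigma> a s t"
  show "has_rs2_integral (\<lambda>u v. \<Sum>k<n. sig_kernel_terms (\<lambda>k. \<phi> (Suc k)) \<gamma> \<sigma> a u v k) \<gamma> \<sigma> a s a t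
      (\<Sum>k<n. ?T (Suc k))" for n
    unfolding sig_kernel_terms_def using has_rs2_integral_sig_inner[OF s t]
    by (intro has_rs2_integral_sum has_rs2_integral_cmult)
  have "summable ?T" by (rule summable_sig_kernel_terms[OF growth s t])
  then have "(\<lambda>n. \<Sum>k<n. ?T (Suc k)) \<longlonglongrightarrow> (\<Sum>k. ?T (Suc k))"
    by (intro summable_LIMSEQ) (simp add: summable_Suc_iff)
  then show "(\<lambda>n. \<Sum>k<n. ?T (Suc k)) \<longlonglongrightarrow> sig_kernel \<phi> \<gamma> \<sigma> a s t - \<phi> 0"
    unfolding suminf_split_head[OF \<open>summable ?T\<close>] sig_kernel_def
    by (simp add: sig_kernel_terms_def sig_inner_0)
  show "uniform_limit ({a..s} \<times> {a..t})
      (\<lambda>n x. \<Sum>k<n. sig_kernel_terms (\<lambda>k. \<phi> (Suc k)) \<gamma> \<sigma> a (fst x) (snd x) k)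
      (\<lambda>x. sig_kernel (\<lambda>k. \<phi> (Suc k)) \<gamma> \<sigma> a (fst x) (snd x)) sequentially"
    using s t by (intro uniform_limit_on_subset[OF uniform_limit_sig_kernel[OF growth_Suc]]) auto
qed (use s t bounded_variation_on_subinterval[OF \<gamma>_bv] bounded_variation_on_subinterval[OF \<sigma>_bv]
    in auto)

end

theorem mainTheorem4:
  fixes \<gamma> \<sigma> :: "real \<Rightarrow> 'v::euclidean_space"
    and \<phi> :: "nat \<Rightarrow> real"
    and a b :: real
  assumes "continuous_on {a..b} \<gamma>" and "continuous_on {a..b} \<sigma>"
    and "bounded_variation_on \<gamma> a b" and "bounded_variation_on \<sigma> a b"
    and "\<And>C. C > 0 \<Longrightarrow> summable (\<lambda>k. C ^ k * \<bar>\<phi> k\<bar> / (fact k)\<^sup>2)"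
    and "\<And>C. C > 0 \<Longrightarrow> summable (\<lambda>k. C ^ k * \<bar>\<phi> (Suc k)\<bar> / (fact k)\<^sup>2)"
  shows "(\<forall>s\<in>{a..b}. \<forall>t\<in>{a..b}.
            summable (sig_kernel_terms \<phi> \<gamma> \<sigma> a s t) \<and>
            summable (sig_kernel_terms (\<lambda>k. \<phi> (Suc k)) \<gamma> \<sigma> a s t)) \<and>
         (\<forall>s\<in>{a..b}. \<forall>t\<in>{a..b}.
            has_rs2_integral (sig_kernel (\<lambda>k. \<phi> (Suc k)) \<gamma> \<sigma> a) \<gamma> \<sigma> a s a t
              (sig_kernel \<phi> \<gamma> \<sigma> a s t - \<phi> 0))"
  using summable_sig_kernel_terms[OF assms(1-4) assms(5)]
    summable_sig_kernel_terms[OF assms(1-4) assms(6)]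
    has_rs2_integral_sig_kernel[OF assms]
  by (intro conjI ballI) auto

end
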